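(* For all $n \geq 0$: (i) $a(a(n)) = 2a(n)$; (ii) $b(b(n)) = 2b(n)$; (iii) $a(b(n)) = 2b(n)+1$; (iv) $b(a(n)) = 2a(n)+1$; (v) $a(a(n)) = b(a(n)) - 1$; (vi) $b(b(n)) = a(b(n)) - 1$; (vii) $a(n) - b(n) = 1 - 2t(n)$, in particular $a(n)-b(n) \in \{1,-1\}$; (viii) $a(b(n)) - b(a(n)) = 4t(n) - 2$, in particular $a(b(n)) - b(a(n)) \in \{2,-2\}$.
   Context: The Thue–Morse sequence $(t(n))_{n\geq 0}$ is defined by $t(0)=0$, $t(2n)=t(n)$, $t(2n+1)=1-t(n)$. A nonnegative integer is odious if the sum of its binary digits is odd and evil if it is even. $(a(n))_{n\geq0}$ is the increasing sequence of odious numbers and $(b(n))_{n\geq 0}$ the increasing sequence of evil numbers, both indexed from $0$ (so $a(0)=1, a(1)=2,\ldots$ and $b(0)=0, b(1)=3, \ldots$). *)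

theory Defs
  imports Main "HOL-Library.Infinite_Set"
begin

fun tm :: "nat \<Rightarrow> nat" where
  "tm n = (if n = 0 then 0 else if even n then tm (n div 2) else 1 - tm (n div 2))"

fun bitsum :: "nat \<Rightarrow> nat" where
  "bitsum n = (if n = 0 then 0 else n mod 2 + bitsum (n div 2))"

definition odious :: "nat \<Rightarrow> bool" where
  "odious n \<longleftrightarrow> odd (bitsum n)"

definition evil :: "nat \<Rightarrow> bool" where
  "evil n \<longleftrightarrow> even (bitsum n)"

text \<open>Increasing enumerations, indexed from 0.\<close>
definition oda :: "nat \<Rightarrow> nat" where
  "oda = enumerate {n. odious n}"

definition evb :: "nat \<Rightarrow> nat" where
  "evb = enumerate {n. evil n}"

end

theory Submission
  imports Defs
begin

(* Each pair {2n, 2n+1} contains exactly one odious and exactly one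
   evil number, because t(2n+1) = 1 - t(2n) and t(k) is the parity of the binary
   digit sum of k.  A set of naturals that picks exactly one element from every such
   pair is enumerated by n |-> (2n or 2n+1, whichever lies in the set).  Hence
     a(n) = 2n + 1 - t(n)   and   b(n) = 2n + t(n).
   Since a(n) is odious and b(n) is evil, t(a(n)) = 1 and t(b(n)) = 0, so
   substituting a(n), b(n) into these closed forms gives (i)-(iv); the remaining
   items are arithmetic consequences of (i)-(iv) and the closed forms. *)

declare tm.simps [simp del] bitsum.simps [simp del]

lemma tm_0 [simp]: "tm 0 = 0"
  by (simp add: tm.simps)

lemma tm_double [simp]: "tm (2 * n) = tm n"
  by (subst tm.simps) simp

(* t(2n+1) = 1 - t(n), stated with Suc (2 * n), the simplifier normal form of 2n+1. *)
lemma tm_double_plus_one [simp]: "tm (Suc (2 * n)) = 1 - tm n"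
  by (subst tm.simps) simp

lemma tm_cases: "tm n = 0 \<or> tm n = 1"
proof -
  have "tm n \<le> 1"
    by (induction n rule: tm.induct) (subst tm.simps, auto)
  then show ?thesis by linarith
qed

lemma tm_eq_bitsum_parity: "tm n = bitsum n mod 2"
proof (induction n rule: tm.induct)
  case (1 n)
  show ?case
  proof (cases "n = 0")
    case False
    then have "bitsum n = n mod 2 + bitsum (n div 2)"
      by (simp add: bitsum.simps)
    with 1 False show ?thesis
      by (subst tm.simps) (auto simp: mod_Suc elim!: oddE)
  qed (simp add: bitsum.simps)
qed

lemma odious_iff_tm: "odious k \<longleftrightarrow> tm k = 1"
  unfolding odious_def tm_eq_bitsum_parity by (simp add: odd_iff_mod_2_eq_one)

lemma evil_iff_tm: "evil k \<longleftrightarrow> tm k = 0"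
  unfolding evil_def tm_eq_bitsum_parity by (simp add: even_iff_mod_2_eq_zero)

lemma enumerate_range_strict_mono:
  fixes f :: "nat \<Rightarrow> nat"
  assumes mono: "strict_mono f"
  shows "enumerate (range f) n = f n"
proof (induction n)
  case 0
  have "(LEAST s. s \<in> range f) = f 0"
    by (rule Least_equality) (auto simp: mono strict_mono_less_eq)
  then show ?case by (simp add: enumerate_0)
next
  case (Suc n)
  have inf: "infinite (range f)"
    using range_inj_infinite strict_mono_imp_inj_on mono by blast
  have "(LEAST s. s \<in> range f \<and> f n < s) = f (Suc n)"
  proof (rule Least_equality)
    show "f (Suc n) \<in> range f \<and> f n < f (Suc n)"
      using mono by (simp add: strict_mono_Suc_iff)
  next
    fix y assume "y \<in> range f \<and> f n < y"
    then obtain k where "y = f k" "n < k"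
      using mono by (auto simp: strict_mono_less)
    then show "f (Suc n) \<le> y"
      using mono by (simp add: strict_mono_less_eq)
  qed
  then show ?case
    using enumerate_Suc''[OF inf, of n] Suc by simp
qed

definition one_per_pair :: "nat set \<Rightarrow> bool" where
  "one_per_pair S \<longleftrightarrow> (\<forall>n. (2 * n \<in> S) \<noteq> (2 * n + 1 \<in> S))"

lemma enumerate_one_per_pair:
  assumes "one_per_pair S"
  shows "enumerate S n = (if 2 * n \<in> S then 2 * n else 2 * n + 1)"
proof -
  define f where "f n = (if 2 * n \<in> S then 2 * n else 2 * n + 1)" for n
  have f_bounds: "2 * n \<le> f n" "f n \<le> 2 * n + 1" for n
    by (auto simp: f_def)
  have "strict_mono f"
  proof (rule strict_mono_Suc_iff[THEN iffD2], rule allI)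
    fix n
    have "f n \<le> 2 * n + 1" "2 * Suc n \<le> f (Suc n)"
      by (rule f_bounds)+
    then show "f n < f (Suc n)" by simp
  qed
  moreover have "range f = S"
  proof
    show "range f \<subseteq> S"
      using assms by (auto simp: one_per_pair_def f_def)
  next
    show "S \<subseteq> range f"
    proof
      fix s assume "s \<in> S"
      then have "s = f (s div 2)"
        using assms[unfolded one_per_pair_def, rule_format, of "s div 2"]
        by (cases "even s") (auto simp: f_def elim!: evenE oddE)
      then show "s \<in> range f" by blast
    qed
  qed
  ultimately show ?thesis
    using enumerate_range_strict_mono[of f n] by (simp add: f_def)
qed

(* Since t(2n+1) = 1 - t(2n), exactly one of 2n, 2n+1 is odious (resp. evil). *)
lemma one_per_pair_odious: "one_per_pair {k. odious k}"
  unfolding one_per_pair_def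
proof
  fix n show "(2 * n \<in> {k. odious k}) \<noteq> (2 * n + 1 \<in> {k. odious k})"
    using tm_cases[of n] by (auto simp: odious_iff_tm)
qed

lemma one_per_pair_evil: "one_per_pair {k. evil k}"
  unfolding one_per_pair_def
proof
  fix n show "(2 * n \<in> {k. evil k}) \<noteq> (2 * n + 1 \<in> {k. evil k})"
    using tm_cases[of n] by (auto simp: evil_iff_tm)
qed

lemma oda_closed_form: "oda n = 2 * n + 1 - tm n"
  using enumerate_one_per_pair[OF one_per_pair_odious, of n] tm_cases[of n]
  by (auto simp: oda_def odious_iff_tm)

lemma evb_closed_form: "evb n = 2 * n + tm n"
  using enumerate_one_per_pair[OF one_per_pair_evil, of n] tm_cases[of n]
  by (auto simp: evb_def evil_iff_tm)

lemma tm_oda: "tm (oda n) = 1"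
  using tm_cases[of n] by (auto simp: oda_closed_form)

lemma tm_evb: "tm (evb n) = 0"
  using tm_cases[of n] by (auto simp: evb_closed_form)

theorem corollary3:
  fixes n :: nat
  shows "(oda (oda n) = 2 * oda n)
    \<and> (evb (evb n) = 2 * evb n)
    \<and> (oda (evb n) = 2 * evb n + 1)
    \<and> (evb (oda n) = 2 * oda n + 1)
    \<and> (int (oda (oda n)) = int (evb (oda n)) - 1)
    \<and> (int (evb (evb n)) = int (oda (evb n)) - 1)
    \<and> (int (oda n) - int (evb n) = 1 - 2 * int (tm n))
    \<and> (int (oda n) - int (evb n) \<in> {1, -1})
    \<and> (int (oda (evb n)) - int (evb (oda n)) = 4 * int (tm n) - 2)
    \<and> (int (oda (evb n)) - int (evb (oda n)) \<in> {2, -2})"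
proof -
  have aa: "oda (oda n) = 2 * oda n"
    using oda_closed_form[of "oda n"] tm_oda[of n] by simp
  have bb: "evb (evb n) = 2 * evb n"
    using evb_closed_form[of "evb n"] tm_evb[of n] by simp
  have ab: "oda (evb n) = 2 * evb n + 1"
    using oda_closed_form[of "evb n"] tm_evb[of n] by simp
  have ba: "evb (oda n) = 2 * oda n + 1"
    using evb_closed_form[of "oda n"] tm_oda[of n] by simp
  show ?thesis
    using aa bb ab ba tm_cases[of n] oda_closed_form[of n] evb_closed_form[of n] by auto
qed

end
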